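(* Let $\mathcal{G}$ be a dynamic multigraph with finite vertex set $\mathcal{V}$ and finite edge set $\mathcal{E}$, and let $\mathcal{L}_{\mathcal{G}}$ be its increment-weighted line graph and $\mathcal{L}^*_{\mathcal{G}}=\bigcup_{i\in\mathcal{V}}\mathcal{M}_{\mathcal{G}}(i)$ its line graph skeleton, both as defined in the context. Then the weighted connectivities of $\mathcal{L}_{\mathcal{G}}$ and $\mathcal{L}^*_{\mathcal{G}}$ are equivalent: for every threshold $\omega\in\mathbb{R}$, $\mathrm{comps}(\mathcal{L}^*_{\mathcal{G}},\omega)=\mathrm{comps}(\mathcal{L}_{\mathcal{G}},\omega)$.
   Context: A dynamic multigraph $\mathcal{G}(\mathcal{V},\mathcal{E},\mathcal{T})$ consists of a finite vertex set $\mathcal{V}$ and a finite set $\mathcal{E}$ of directed timestamped edges $e_r=(i_r,j_r,t_r)$ with $i_r,j_r\in\mathcal{V}$, $i_r\neq j_r$ (no self loops), $t_r\in\mathcal{T}=[0,T]$; several edges may join the same ordered pair at different times, timestamps may tie across edges, and no two edges agree in both ordered vertex pair and timestamp. For $i\in\mathcal{V}$, $\mathcal{E}^{(in)}_i=\{e_r\in\mathcal{E}: j_r=i\}$, $\mathcal{E}^{(out)}_i=\{e_r\in\mathcal{E}: i_r=i\}$, $\mathcal{E}_i=\mathcal{E}^{(in)}_i\cup\mathcal{E}^{(out)}_i$. Increment-weighted line graph $\mathcal{L}_{\mathcal{G}}$: its vertex set is $\mathcal{E}$; for $e_r,e_s\in\mathcal{E}$ there is a directed edge $(e_r,e_s)$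 with weight $w_{rs}=t_s-t_r$ if and only if $j_r=i_s$ (tip-to-tail) and $t_r\le t_s$. Line graph skeleton: for each $i\in\mathcal{V}$, the set $\mathcal{M}_{\mathcal{G}}(i)$ is produced as follows. Sort $\mathcal{E}_i$ by timestamp, with incoming edges placed before outgoing edges when timestamps are equal. Start with an empty list $W$ and an empty output. Process the edges of $\mathcal{E}_i$ in sorted order: if the current edge $e_j$ is incoming to $i$, append it to $W$; if it is outgoing from $i$, then for every $e_k\in W$ add the pair $(e_k,e_j)$ to the output, and then replace $W$ by the one-element list consisting of the last element of $W$ (leaving $W$ empty if it was empty). Each output pair $(e_k,e_j)$ is an edge with weight $t_j-t_k$. $\mathcal{L}^*_{\mathcal{G}}$ is the weighted graph on vertex set $\mathcal{E}$ whose edge set is the union over all $i\in\mathcal{V}$ of these outputs. Weight-filtered connected components: for a weighted graph $\mathcal{H}$ and threshold $\omega$, $\mathrm{comps}(\mathcal{H},\omega)$ is the set of connected components (ignoring edge directions) of the graph on the same vertex set that keeps only the edges of weight $\le\omega$. Two weighted graphs on the same vertex set have equivalent weighted connectivities if their weight-filtered connected components coincide for every $\omega$. *)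

theory Defs
  imports Main "HOL.Real"
begin

type_synonym 'v tedge = "'v \<times> 'v \<times> real"

definition src :: "'v tedge \<Rightarrow> 'v" where "src e = fst e"
definition dst :: "'v tedge \<Rightarrow> 'v" where "dst e = fst (snd e)"
definition tstamp :: "'v tedge \<Rightarrow> real" where "tstamp e = snd (snd e)"

text \<open>Dynamic multigraph with vertex set V, edge set E, time window [0,T].
  Representing E as a set of triples makes (pair, timestamp) unique automatically.\<close>
definition dyn_multigraph :: "'v set \<Rightarrow> 'v tedge set \<Rightarrow> real \<Rightarrow> bool" where
  "dyn_multigraph V E T \<longleftrightarrow> finite V \<and> finite E \<and>
     (\<forall>e\<in>E. src e \<in> V \<and> dst e \<in> V \<and> src e \<noteq> dst e \<and> tstamp e \<in> {0..T})"

definition line_graph :: "'v tedge set \<Rightarrow> ('v tedge \<times> 'v tedge \<times> real) set" where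
  "line_graph E = {(r, s, tstamp s - tstamp r) | r s.
      r \<in> E \<and> s \<in> E \<and> dst r = src s \<and> tstamp r \<le> tstamp s}"

definition incident :: "'v tedge set \<Rightarrow> 'v \<Rightarrow> 'v tedge set" where
  "incident E i = {e \<in> E. dst e = i \<or> src e = i}"

text \<open>xs is a valid sorting of E_i: by timestamp, incoming before outgoing on ties
  (ties within the same kind broken arbitrarily).\<close>
definition valid_sort :: "'v tedge set \<Rightarrow> 'v \<Rightarrow> 'v tedge list \<Rightarrow> bool" where
  "valid_sort E i xs \<longleftrightarrow> distinct xs \<and> set xs = incident E i \<and>
     sorted_wrt (\<lambda>a b. tstamp a < tstamp b \<or>
                        (tstamp a = tstamp b \<and> (dst a = i \<or> dst b \<noteq> i))) xs"

fun skel_proc :: "'v \<Rightarrow> 'v tedge list \<Rightarrow> 'v tedge list \<Rightarrow> ('v tedge \<times> 'v tedge \<times> real) set" where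
  "skel_proc i W [] = {}"
| "skel_proc i W (e # es) =
     (if dst e = i then skel_proc i (W @ [e]) es
      else {(k, e, tstamp e - tstamp k) | k. k \<in> set W} \<union>
           skel_proc i (if W = [] then [] else [last W]) es)"

definition skeleton_at :: "'v \<Rightarrow> 'v tedge list \<Rightarrow> ('v tedge \<times> 'v tedge \<times> real) set" where
  "skeleton_at i xs = skel_proc i [] xs"

definition skeleton :: "'v set \<Rightarrow> ('v \<Rightarrow> 'v tedge list) \<Rightarrow> ('v tedge \<times> 'v tedge \<times> real) set" where
  "skeleton V ord = (\<Union>i\<in>V. skeleton_at i (ord i))"

definition comps :: "'a set \<Rightarrow> ('a \<times> 'a \<times> real) set \<Rightarrow> real \<Rightarrow> 'a set set" where
  "comps Vs H \<omega> =
     (let R = {(x, y). \<exists>w. (x, y, w) \<in> H \<and> w \<le> \<omega> \<and> x \<in> Vs \<and> y \<in> Vs}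
      in Vs // ((R \<union> R\<inverse>)\<^sup>*))"

end

theory Submission
  imports Defs
begin

text \<open>Every edge (k, e) emitted at vertex i joins an incoming edge to a later outgoing edge with
  weight t_e - t_k, so the skeleton is a weighted subgraph of the line graph; it remains to show
  that each line-graph edge (r, s) of weight at most \<omega> is bridged by a skeleton path of such
  edges. Let o_1, ..., o_m = s be the outgoing edges of i from r up to s, and l_j the last
  incoming edge before o_j. Then r - o_1 - l_1 - o_2 - l_2 - ... - o_m is a skeleton path, and
  all its edges have weight at most t_s - t_r, since all timestamps involved lie in
  [t_r, t_s].\<close>

lemma sorted_map_le_last: "sorted (map f xs) \<Longrightarrow> x \<in> set xs \<Longrightarrow> f x \<le> f (last xs)"
  by (induction xs) (auto simp: sorted_append)

definition weight_filter :: "('a \<times> 'a \<times> real) set \<Rightarrow> real \<Rightarrow> ('a \<times> 'a) set" where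
  "weight_filter H \<omega> = {(x, y). \<exists>w. (x, y, w) \<in> H \<and> w \<le> \<omega>}"

definition equiv_closure :: "('a \<times> 'a) set \<Rightarrow> ('a \<times> 'a) set" where
  "equiv_closure R = (R \<union> R\<inverse>)\<^sup>*"

lemma weight_filterI: "(x, y, w) \<in> H \<Longrightarrow> w \<le> \<omega> \<Longrightarrow> (x, y) \<in> weight_filter H \<omega>"
  unfolding weight_filter_def by blast

lemma weight_filter_mono: "H \<subseteq> H' \<Longrightarrow> weight_filter H \<omega> \<subseteq> weight_filter H' \<omega>"
  unfolding weight_filter_def by blast

lemma equiv_closure_mono: "R \<subseteq> S \<Longrightarrow> equiv_closure R \<subseteq> equiv_closure S"
  unfolding equiv_closure_def by (intro rtrancl_mono) blast

lemma equiv_closure_converse: "(equiv_closure R)\<inverse> = equiv_closure R"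
  unfolding equiv_closure_def by (simp add: rtrancl_converse[symmetric] converse_Un Un_commute)

lemma equiv_closure_base: "(x, y) \<in> R \<Longrightarrow> (x, y) \<in> equiv_closure R"
  unfolding equiv_closure_def by blast

lemma equiv_closure_sym: "(x, y) \<in> equiv_closure R \<Longrightarrow> (y, x) \<in> equiv_closure R"
  using equiv_closure_converse by blast

lemma equiv_closure_trans:
  "(x, y) \<in> equiv_closure R \<Longrightarrow> (y, z) \<in> equiv_closure R \<Longrightarrow> (x, z) \<in> equiv_closure R"
  unfolding equiv_closure_def by (rule rtrancl_trans)

lemma equiv_closure_weight_filter_mono:
  "(x, y) \<in> equiv_closure (weight_filter H \<omega>) \<Longrightarrow> H \<subseteq> H'
    \<Longrightarrow> (x, y) \<in> equiv_closure (weight_filter H' \<omega>)"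
  using equiv_closure_mono[OF weight_filter_mono] by blast

lemma equiv_closure_eqI:
  assumes "R \<subseteq> S" and "S \<subseteq> equiv_closure R"
  shows "equiv_closure R = equiv_closure S"
proof -
  have "S\<inverse> \<subseteq> equiv_closure R"
    using assms(2) equiv_closure_converse by blast
  with assms show ?thesis
    unfolding equiv_closure_def by (intro rtrancl_subset[symmetric]) auto
qed

lemma comps_eq_quotient:
  assumes "H \<subseteq> Vs \<times> Vs \<times> UNIV"
  shows "comps Vs H \<omega> = Vs // equiv_closure (weight_filter H \<omega>)"
proof -
  have "{(x, y). \<exists>w. (x, y, w) \<in> H \<and> w \<le> \<omega> \<and> x \<in> Vs \<and> y \<in> Vs} = weight_filter H \<omega>"
    using assms unfolding weight_filter_def by blast
  then show ?thesis
    unfolding comps_def equiv_closure_def Let_def by simp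
qed

lemma comps_eq_if_subset_connected:
  assumes "H \<subseteq> H'" and "H' \<subseteq> Vs \<times> Vs \<times> UNIV"
    and "weight_filter H' \<omega> \<subseteq> equiv_closure (weight_filter H \<omega>)"
  shows "comps Vs H \<omega> = comps Vs H' \<omega>"
proof -
  have "equiv_closure (weight_filter H \<omega>) = equiv_closure (weight_filter H' \<omega>)"
    using assms(1,3) by (intro equiv_closure_eqI weight_filter_mono)
  moreover have "H \<subseteq> Vs \<times> Vs \<times> UNIV"
    using assms(1,2) by (rule order_trans)
  ultimately show ?thesis
    using assms(2) by (simp add: comps_eq_quotient)
qed

lemma skel_proc_edge:
  assumes "(k, e, w) \<in> skel_proc i W xs" and "sorted (map tstamp (W @ xs))"
  shows "(k \<in> set W \<or> k \<in> set xs \<and> dst k = i) \<and> e \<in> set xs \<and> dst e \<noteq> i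
    \<and> tstamp k \<le> tstamp e \<and> w = tstamp e - tstamp k"
  using assms
proof (induction xs arbitrary: W)
  case Nil
  then show ?case by simp
next
  case (Cons x xs)
  show ?case
  proof (cases "dst x = i")
    case True
    with Cons.prems have "(k, e, w) \<in> skel_proc i (W @ [x]) xs" "sorted (map tstamp ((W @ [x]) @ xs))"
      by simp_all
    with True Cons.IH show ?thesis by fastforce
  next
    case False
    let ?W' = "if W = [] then [] else [last W]"
    from Cons.prems(1) False consider
        "k \<in> set W" "e = x" "w = tstamp x - tstamp k"
      | "(k, e, w) \<in> skel_proc i ?W' xs"
      by auto
    then show ?thesis
    proof cases
      case 1
      with Cons.prems(2) False show ?thesis by (simp add: sorted_append)
    next
      case 2
      have "sorted (map tstamp (?W' @ xs))"
        using Cons.prems(2) by (auto simp: sorted_append)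
      from Cons.IH[OF 2 this] show ?thesis
        by (auto split: if_splits)
    qed
  qed
qed

lemma valid_sort_sorted: "valid_sort E i xs \<Longrightarrow> sorted (map tstamp xs)"
  unfolding valid_sort_def sorted_map by (elim conjE sorted_wrt_mono_rel[rotated]) auto

lemma valid_sort_outgoing_after_incoming:
  assumes "valid_sort E i (as @ r # bs)" and "dst r = i"
    and "s \<in> incident E i" and "dst s \<noteq> i" and "tstamp r \<le> tstamp s"
  shows "s \<in> set bs"
proof -
  from assms(1) have sorted: "sorted_wrt (\<lambda>a b. tstamp a < tstamp b \<or>
      tstamp a = tstamp b \<and> (dst a = i \<or> dst b \<noteq> i)) (as @ r # bs)"
    and set: "set (as @ r # bs) = incident E i"
    unfolding valid_sort_def by blast+
  have "s \<notin> set as"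
  proof
    assume "s \<in> set as"
    with sorted have "tstamp s < tstamp r \<or> tstamp s = tstamp r \<and> (dst s = i \<or> dst r \<noteq> i)"
      by (simp add: sorted_wrt_append)
    with assms(2,4,5) show False by linarith
  qed
  moreover have "s \<noteq> r"
    using assms(2,4) by blast
  ultimately show ?thesis
    using set assms(3) by auto
qed

lemma skeleton_at_subset_line_graph:
  assumes "valid_sort E i xs"
  shows "skeleton_at i xs \<subseteq> line_graph E"
proof clarify
  fix k e w assume "(k, e, w) \<in> skeleton_at i xs"
  then have "(k, e, w) \<in> skel_proc i [] xs"
    unfolding skeleton_at_def .
  from skel_proc_edge[OF this] valid_sort_sorted[OF assms]
  have "k \<in> set xs" "dst k = i" "e \<in> set xs" "dst e \<noteq> i"
    "tstamp k \<le> tstamp e" "w = tstamp e - tstamp k"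
    by simp_all
  moreover have "set xs = incident E i"
    using assms unfolding valid_sort_def by blast
  ultimately have "k \<in> E" "e \<in> E" "dst k = src e" "tstamp k \<le> tstamp e" "w = tstamp e - tstamp k"
    unfolding incident_def by auto
  then show "(k, e, w) \<in> line_graph E"
    unfolding line_graph_def by blast
qed

lemma skeleton_subset_line_graph:
  "\<forall>i\<in>V. valid_sort E i (ord i) \<Longrightarrow> skeleton V ord \<subseteq> line_graph E"
  unfolding skeleton_def by (intro UN_least skeleton_at_subset_line_graph) simp

lemma line_graph_subset: "line_graph E \<subseteq> E \<times> E \<times> UNIV"
  unfolding line_graph_def by blast

lemma skel_proc_connects_from_window:
  assumes "sorted (map tstamp (W @ xs))" and "l \<in> set W" and "s \<in> set xs" and "dst s \<noteq> i"
    and "tstamp s - tstamp l \<le> \<omega>"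
  shows "(l, s) \<in> equiv_closure (weight_filter (skel_proc i W xs) \<omega>)"
  using assms
proof (induction xs arbitrary: W l)
  case Nil
  then show ?case by simp
next
  case (Cons x xs)
  show ?case
  proof (cases "dst x = i")
    case True
    with Cons.prems have "s \<in> set xs" by auto
    with True Cons.prems Cons.IH[of "W @ [x]" l] show ?thesis by simp
  next
    case False
    let ?C = "equiv_closure (weight_filter (skel_proc i W (x # xs)) \<omega>)"
    \<comment> \<open>l' is the l_j of the path: the only element of the window kept after x\<close>
    define l' where "l' = last W"
    from Cons.prems(2) have "W \<noteq> []" by auto
    with False have skel: "skel_proc i W (x # xs) =
        {(k, x, tstamp x - tstamp k) | k. k \<in> set W} \<union> skel_proc i [l'] xs"
      by (simp add: l'_def)
    have "l' \<in> set W"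
      using \<open>W \<noteq> []\<close> by (simp add: l'_def)
    have "tstamp l \<le> tstamp l'"
      using Cons.prems(1,2) sorted_map_le_last unfolding l'_def by (auto simp: sorted_append)
    have "tstamp x \<le> tstamp s"
      using Cons.prems(1,3) by (auto simp: sorted_append)
    have edge: "(k, x) \<in> ?C" if "k \<in> set W" "tstamp x - tstamp k \<le> \<omega>" for k
    proof (intro equiv_closure_base weight_filterI[of k x "tstamp x - tstamp k"])
      show "(k, x, tstamp x - tstamp k) \<in> skel_proc i W (x # xs)"
        unfolding skel using that(1) by blast
    qed (rule that(2))
    have "(l, x) \<in> ?C"
      using edge \<open>l \<in> set W\<close> Cons.prems(5) \<open>tstamp x \<le> tstamp s\<close> by simp
    show ?thesis
    proof (cases "s = x")
      case True
      with \<open>(l, x) \<in> ?C\<close> show ?thesis by simp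
    next
      case False
      have "(l', x) \<in> ?C"
        using edge \<open>l' \<in> set W\<close> Cons.prems(5) \<open>tstamp x \<le> tstamp s\<close> \<open>tstamp l \<le> tstamp l'\<close>
        by simp
      have "sorted (map tstamp ([l'] @ xs))"
        using Cons.prems(1) \<open>l' \<in> set W\<close> by (auto simp: sorted_append)
      moreover have "s \<in> set xs"
        using False Cons.prems(3) by simp
      ultimately have "(l', s) \<in> equiv_closure (weight_filter (skel_proc i [l'] xs) \<omega>)"
        using Cons.IH[of "[l']" l'] Cons.prems(4,5) \<open>tstamp l \<le> tstamp l'\<close> by simp
      then have "(l', s) \<in> ?C"
        by (rule equiv_closure_weight_filter_mono) (unfold skel, blast)
      with \<open>(l, x) \<in> ?C\<close> \<open>(l', x) \<in> ?C\<close> show ?thesis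
        by (blast intro: equiv_closure_trans equiv_closure_sym)
    qed
  qed
qed

lemma skel_proc_connects_incoming:
  assumes "sorted (map tstamp (W @ as @ r # bs))" and "dst r = i" and "s \<in> set bs"
    and "dst s \<noteq> i" and "tstamp s - tstamp r \<le> \<omega>"
  shows "(r, s) \<in> equiv_closure (weight_filter (skel_proc i W (as @ r # bs)) \<omega>)"
  using assms
proof (induction as arbitrary: W)
  case Nil
  then show ?case
    using skel_proc_connects_from_window[of "W @ [r]" bs r s i \<omega>] by simp
next
  case (Cons a as)
  define W' where "W' = (if dst a = i then W @ [a] else if W = [] then [] else [last W])"
  have "sorted (map tstamp (W' @ as @ r # bs))"
    using Cons.prems(1) unfolding W'_def by (auto simp: sorted_append)
  with Cons.IH Cons.prems(2-5)
  have "(r, s) \<in> equiv_closure (weight_filter (skel_proc i W' (as @ r # bs)) \<omega>)"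
    by blast
  then show ?case
    by (rule equiv_closure_weight_filter_mono) (auto simp: W'_def)
qed

lemma line_graph_edge_connected_in_skeleton:
  assumes "dyn_multigraph V E T" and "\<forall>i\<in>V. valid_sort E i (ord i)"
    and "(r, s, w) \<in> line_graph E" and "w \<le> \<omega>"
  shows "(r, s) \<in> equiv_closure (weight_filter (skeleton V ord) \<omega>)"
proof -
  define i where "i = dst r"
  from assms(3,4) have "r \<in> E" "s \<in> E" "src s = i" "tstamp r \<le> tstamp s"
    "tstamp s - tstamp r \<le> \<omega>"
    unfolding line_graph_def i_def by auto
  with assms(1) have "i \<in> V" "dst s \<noteq> i"
    unfolding dyn_multigraph_def i_def by auto
  with assms(2) have sort: "valid_sort E i (ord i)" by blast
  have "r \<in> set (ord i)" "s \<in> incident E i"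
    using sort \<open>r \<in> E\<close> \<open>s \<in> E\<close> \<open>src s = i\<close>
    unfolding valid_sort_def incident_def i_def by auto
  then obtain as bs where split: "ord i = as @ r # bs"
    by (meson split_list)
  with sort have "s \<in> set bs"
    using valid_sort_outgoing_after_incoming \<open>s \<in> incident E i\<close> \<open>dst s \<noteq> i\<close>
      \<open>tstamp r \<le> tstamp s\<close> i_def by metis
  then have "(r, s) \<in> equiv_closure (weight_filter (skeleton_at i (ord i)) \<omega>)"
    using skel_proc_connects_incoming[of "[]" as r bs i s \<omega>] valid_sort_sorted[OF sort] split
      \<open>dst s \<noteq> i\<close> \<open>tstamp s - tstamp r \<le> \<omega>\<close>
    unfolding skeleton_at_def i_def by simp
  then show ?thesis
    by (rule equiv_closure_weight_filter_mono) (use \<open>i \<in> V\<close> in \<open>auto simp: skeleton_def\<close>)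
qed

theorem mainTheorem1:
  fixes V :: "'v set" and E :: "'v tedge set" and T :: real
    and ord :: "'v \<Rightarrow> 'v tedge list" and \<omega> :: real
  assumes "dyn_multigraph V E T"
    and "\<forall>i\<in>V. valid_sort E i (ord i)"
  shows "comps E (skeleton V ord) \<omega> = comps E (line_graph E) \<omega>"
proof (rule comps_eq_if_subset_connected)
  show "skeleton V ord \<subseteq> line_graph E"
    using assms(2) by (rule skeleton_subset_line_graph)
  show "line_graph E \<subseteq> E \<times> E \<times> UNIV"
    by (rule line_graph_subset)
  show "weight_filter (line_graph E) \<omega> \<subseteq> equiv_closure (weight_filter (skeleton V ord) \<omega>)"
    using line_graph_edge_connected_in_skeleton[OF assms] unfolding weight_filter_def by blast
qed

end
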